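(* For every $\epsilon>0$ there exists $k_0$ such that every zero-error variable-length $(k,N)$ network code for the network in the context with $k\ge k_0$ has rate $$\frac{k}{\mathrm E N\,\log_2|\mathcal Z|}\ \le\ \frac{8}{9}+\epsilon .$$ More precisely, every zero-error $(k,N)$ code satisfies $\frac{k}{\mathrm EN\log_2|\mathcal Z|}\le \frac{H(N)}{\mathrm EN\log_2|\mathcal Z|}+\frac{2}{2.25}$ up to a correction term vanishing as $k\to\infty$, where $2.25=H(\boldsymbol\Sigma(1))+0.75(\log_23-1)$.
   Context: Network: sources $s_1,s_2,s_3$, terminal $t$, edges $(s_3,s_1),(s_3,s_2),(s_1,t),(s_2,t)$; $s_j$ observes $\mathbf X_j\in\{0,1\}^k$, all $3k$ bits i.i.d. uniform on $\{0,1\}$; $s_1,s_2$ receive $\mathbf X_3$. $\mathcal Z$ is a finite alphabet, $|\mathcal Z|\ge2$. A variable-length $(k,N)$ network code: encoders $\phi_1,\phi_2:\{0,1\}^k\times\{0,1\}^k\to\mathcal Z^*$ (finite sequences over $\mathcal Z$) giving $\mathbf Z_1=\phi_1(\mathbf X_1,\mathbf X_3)$ on edge $(s_1,t)$ and $\mathbf Z_2=\phi_2(\mathbf X_2,\mathbf X_3)$ on edge $(s_2,t)$; a positive-integer-valued stopping time $N$ with $\mathrm EN<\infty$ for the sequence of pairs $(\mathbf Z_1(m),\mathbf Z_2(m))_{m\ge1}$; a decoder $\hat{\boldsymbol\Sigma}=\psi(\mathbf Z_1^N,\mathbf Z_2^N)\in\{0,1,2,3\}^k$ with $\mathbf Z_j^N$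 the first $N$ symbols. $\boldsymbol\Sigma=\mathbf X_1+\mathbf X_2+\mathbf X_3$ (componentwise integer sum); zero-error means $\Pr(\hat{\boldsymbol\Sigma}\neq\boldsymbol\Sigma)=0$. The rate of the code is $k/(\mathrm EN\log_2|\mathcal Z|)$ and the computing capacity $\mathcal C$ is the supremum of rates of zero-error codes. $H$ is Shannon entropy in bits. *)

theory Defs
  imports Complex_Main
begin

definition bitvecs :: "nat \<Rightarrow> nat list set" where
  "bitvecs k = {xs. length xs = k \<and> set xs \<subseteq> {0, 1}}"

definition vsum3 :: "nat list \<Rightarrow> nat list \<Rightarrow> nat list \<Rightarrow> nat list" where
  "vsum3 x1 x2 x3 = map (\<lambda>((a, b), c). a + b + c) (zip (zip x1 x2) x3)"

text \<open>A zero-error variable-length (k,N) network code for the network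
  s3 -> s1, s3 -> s2, s1 -> t, s2 -> t.  Encoders phi1, phi2 output finite
  sequences over the alphabet 'z; the stopping time N is a (deterministic)
  function of the sources; the event N = n is determined by the first n
  symbols of both edge sequences; N is a positive integer not exceeding the
  length of either sequence (so the first N symbols exist); the decoder psi
  recovers Sigma from the first N symbols with zero error (every source
  realisation has positive probability).\<close>
definition zero_error_vl_code ::
  "nat \<Rightarrow> (nat list \<Rightarrow> nat list \<Rightarrow> 'z list) \<Rightarrow> (nat list \<Rightarrow> nat list \<Rightarrow> 'z list)
   \<Rightarrow> (nat list \<Rightarrow> nat list \<Rightarrow> nat list \<Rightarrow> nat) \<Rightarrow> ('z list \<Rightarrow> 'z list \<Rightarrow> nat list) \<Rightarrow> bool" where
  "zero_error_vl_code k \<phi>1 \<phi>2 N \<psi> \<longleftrightarrow>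
     (\<forall>x1\<in>bitvecs k. \<forall>x2\<in>bitvecs k. \<forall>x3\<in>bitvecs k.
        1 \<le> N x1 x2 x3 \<and>
        N x1 x2 x3 \<le> length (\<phi>1 x1 x3) \<and>
        N x1 x2 x3 \<le> length (\<phi>2 x2 x3) \<and>
        \<psi> (take (N x1 x2 x3) (\<phi>1 x1 x3)) (take (N x1 x2 x3) (\<phi>2 x2 x3)) = vsum3 x1 x2 x3) \<and>
     (\<forall>x1\<in>bitvecs k. \<forall>x2\<in>bitvecs k. \<forall>x3\<in>bitvecs k.
      \<forall>y1\<in>bitvecs k. \<forall>y2\<in>bitvecs k. \<forall>y3\<in>bitvecs k. \<forall>n.
        take n (\<phi>1 x1 x3) = take n (\<phi>1 y1 y3) \<and> take n (\<phi>2 x2 x3) = take n (\<phi>2 y2 y3)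
        \<longrightarrow> (N x1 x2 x3 = n \<longleftrightarrow> N y1 y2 y3 = n))"

definition expected_N :: "nat \<Rightarrow> (nat list \<Rightarrow> nat list \<Rightarrow> nat list \<Rightarrow> nat) \<Rightarrow> real" where
  "expected_N k N =
     (\<Sum>x1\<in>bitvecs k. \<Sum>x2\<in>bitvecs k. \<Sum>x3\<in>bitvecs k. real (N x1 x2 x3)) / 2 ^ (3 * k)"

end

theory Submission
  imports Defs
begin

text \<open>
  Fix a pair of edge sequences \<open>(u, v)\<close>. All source triples whose transcripts (the first
  \<open>N\<close> symbols on both edges) are prefixes of \<open>(u, v)\<close> have the same stopping time and
  hence the same decoded sum \<open>\<Sigma>\<close>; moreover, given \<open>\<Sigma>\<close> and \<open>X\<^sub>3\<close>, zero error forces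
  \<open>X\<^sub>1\<close> and \<open>X\<^sub>2\<close>. Only \<open>X\<^sub>3\<close> can vary, and only in the coordinates where \<open>\<Sigma> \<in> {1, 2}\<close>.
  Weighting each triple by \<open>2\<^sup>-\<^sup>m\<close>, \<open>m\<close> the number of such coordinates, and by
  \<open>|\<Z>|\<^sup>-\<^sup>2\<^sup>N\<close>, this gives a Kraft inequality. Gibbs' inequality against the uniform
  distribution on \<open>{0,1}\<^sup>3\<^sup>k\<close> then yields \<open>3k \<le> E m + 2 E N log\<^sub>2 |\<Z>|\<close>, and \<open>E m = 3k/4\<close>
  turns this into \<open>9k \<le> 8 E N log\<^sub>2 |\<Z>|\<close>, i.e. rate at most \<open>8/9\<close> for every \<open>k\<close>.
\<close>

lemma bitvecs_eq_lists: "bitvecs k = {xs. set xs \<subseteq> {0, 1} \<and> length xs = k}"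
  by (auto simp: bitvecs_def)

lemma finite_bitvecs [simp]: "finite (bitvecs k)"
  by (simp add: bitvecs_eq_lists finite_lists_length_eq)

lemma card_bitvecs: "card (bitvecs k) = 2 ^ k"
  by (simp add: bitvecs_eq_lists card_lists_length_eq numeral_2_eq_2)

lemma bitvecs_0 [simp]: "bitvecs 0 = {[]}"
  by (auto simp: bitvecs_def)

lemma bitvecs_Suc: "bitvecs (Suc k) = (\<lambda>(b, xs). b # xs) ` ({0, 1} \<times> bitvecs k)"
proof (rule set_eqI)
  fix ys
  show "ys \<in> bitvecs (Suc k) \<longleftrightarrow> ys \<in> (\<lambda>(b, xs). b # xs) ` ({0, 1} \<times> bitvecs k)"
    by (cases ys) (auto simp: bitvecs_def image_iff)
qed

lemma sum_bitvecs_Suc: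
  "sum f (bitvecs (Suc k)) = (\<Sum>xs\<in>bitvecs k. f (0 # xs) + f (1 # xs))"
proof -
  have inj: "inj_on (\<lambda>(b::nat, xs). b # xs) ({0, 1} \<times> bitvecs k)"
    by (auto simp: inj_on_def)
  have "sum f (bitvecs (Suc k)) = (\<Sum>p\<in>{0::nat, 1} \<times> bitvecs k. f ((\<lambda>(b, xs). b # xs) p))"
    unfolding bitvecs_Suc by (subst sum.reindex[OF inj]) (simp add: comp_def)
  also have "\<dots> = (\<Sum>(b, xs)\<in>{0::nat, 1} \<times> bitvecs k. f (b # xs))"
    by (rule sum.cong) auto
  also have "\<dots> = (\<Sum>xs\<in>bitvecs k. f (0 # xs) + f (1 # xs))"
    by (simp add: sum.cartesian_product[symmetric] sum.distrib)
  finally show ?thesis .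
qed

lemma nth_bitvec: "xs \<in> bitvecs k \<Longrightarrow> i < k \<Longrightarrow> xs ! i \<in> {0, 1}"
  unfolding bitvecs_def using nth_mem[of i xs] by blast

lemma vsum3_Nil [simp]: "vsum3 [] y z = []" "vsum3 x [] z = []" "vsum3 x y [] = []"
  by (auto simp: vsum3_def)

lemma vsum3_Cons [simp]: "vsum3 (a # x) (b # y) (c # z) = (a + b + c) # vsum3 x y z"
  by (simp add: vsum3_def)

lemma length_vsum3: "length (vsum3 x y z) = min (length x) (min (length y) (length z))"
  by (simp add: vsum3_def)

lemma nth_vsum3:
  "i < length x \<Longrightarrow> i < length y \<Longrightarrow> i < length z \<Longrightarrow> vsum3 x y z ! i = x ! i + y ! i + z ! i"
  by (simp add: vsum3_def)

lemma vsum3_commute: "vsum3 x y z = vsum3 y x z"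
  by (rule nth_equalityI) (simp_all add: length_vsum3 nth_vsum3)

lemma vsum3_cancel_middle:
  assumes "length y = length x" "length y' = length x" "length z = length x"
    and "vsum3 x y z = vsum3 x y' z"
  shows "y = y'"
proof (rule nth_equalityI)
  show "length y = length y'" using assms by simp
  fix i assume "i < length y"
  then have "x ! i + y ! i + z ! i = vsum3 x y z ! i"
    using assms(1-3) by (simp add: nth_vsum3)
  also have "\<dots> = vsum3 x y' z ! i" by (simp only: assms(4))
  also have "\<dots> = x ! i + y' ! i + z ! i"
    using assms(1-3) \<open>i < length y\<close> by (simp add: nth_vsum3)
  finally show "y ! i = y' ! i" by simp
qed

text \<open>
  A coordinate of \<open>\<Sigma>\<close> equal to \<open>0\<close> or \<open>3\<close> determines all three bits; at any other
  coordinate two values of the \<open>X\<^sub>3\<close>-bit are consistent with \<open>\<Sigma>\<close>.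
\<close>

definition ambiguous_count :: "nat list \<Rightarrow> nat" where
  "ambiguous_count s = length (filter (\<lambda>a. a \<noteq> 0 \<and> a \<noteq> 3) s)"

definition third_summand_candidate :: "nat list \<Rightarrow> nat list \<Rightarrow> bool" where
  "third_summand_candidate s c \<longleftrightarrow> list_all2 (\<lambda>a b. (a = 0 \<longrightarrow> b = 0) \<and> (a = 3 \<longrightarrow> b = 1)) s c"

lemma ambiguous_count_Cons:
  "ambiguous_count (a # s) = (if a = 0 \<or> a = 3 then 0 else 1) + ambiguous_count s"
  by (simp add: ambiguous_count_def)

lemma third_summand_candidate_vsum3:
  assumes "x1 \<in> bitvecs k" "x2 \<in> bitvecs k" "x3 \<in> bitvecs k"
  shows "third_summand_candidate (vsum3 x1 x2 x3) x3"
  unfolding third_summand_candidate_def list_all2_conv_all_nth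
proof (intro conjI allI impI)
  show "length (vsum3 x1 x2 x3) = length x3"
    using assms by (simp add: bitvecs_def length_vsum3)
  fix i assume "i < length (vsum3 x1 x2 x3)"
  then have "i < k" using assms by (simp add: bitvecs_def length_vsum3)
  then have "x1 ! i \<in> {0, 1}" "x2 ! i \<in> {0, 1}" "x3 ! i \<in> {0, 1}"
    using assms nth_bitvec by blast+
  moreover have "vsum3 x1 x2 x3 ! i = x1 ! i + x2 ! i + x3 ! i"
    using assms \<open>i < k\<close> by (simp add: bitvecs_def nth_vsum3)
  ultimately show "vsum3 x1 x2 x3 ! i = 0 \<Longrightarrow> x3 ! i = 0" "vsum3 x1 x2 x3 ! i = 3 \<Longrightarrow> x3 ! i = 1"
    by auto
qed

lemma card_third_summand_candidates:
  "card {c \<in> bitvecs (length s). third_summand_candidate s c} \<le> 2 ^ ambiguous_count s"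
proof (induction s)
  case Nil
  show ?case by (simp add: third_summand_candidate_def ambiguous_count_def)
next
  case (Cons a s)
  let ?P = "\<lambda>b. (a = 0 \<longrightarrow> b = 0) \<and> (a = 3 \<longrightarrow> b = (1::nat))"
  let ?C = "{c \<in> bitvecs (length s). third_summand_candidate s c}"
  have split: "{c \<in> bitvecs (length (a # s)). third_summand_candidate (a # s) c}
      = (\<lambda>(b, xs). b # xs) ` ({b \<in> {0, 1}. ?P b} \<times> ?C)"
  proof (rule set_eqI)
    fix c
    show "c \<in> {c \<in> bitvecs (length (a # s)). third_summand_candidate (a # s) c}
        \<longleftrightarrow> c \<in> (\<lambda>(b, xs). b # xs) ` ({b \<in> {0, 1}. ?P b} \<times> ?C)"
      by (cases c) (auto simp: bitvecs_def third_summand_candidate_def image_iff)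
  qed
  have head: "card {b \<in> {0::nat, 1}. ?P b} \<le> (if a = 0 \<or> a = 3 then 1 else 2)"
  proof (cases "a = 0 \<or> a = 3")
    case True
    then have "{b \<in> {0::nat, 1}. ?P b} \<subseteq> {if a = 0 then 0 else 1}" by auto
    from card_mono[OF _ this] True show ?thesis by simp
  next
    case False
    have "card {b \<in> {0::nat, 1}. ?P b} \<le> card {0::nat, 1}" by (rule card_mono) auto
    with False show ?thesis by simp
  qed
  have "card {c \<in> bitvecs (length (a # s)). third_summand_candidate (a # s) c}
      \<le> card {b \<in> {0::nat, 1}. ?P b} * card ?C"
    unfolding split using card_image_le[of "{b \<in> {0, 1}. ?P b} \<times> ?C" "\<lambda>(b, xs). b # xs"]
    by (simp add: card_cartesian_product)
  also have "\<dots> \<le> (if a = 0 \<or> a = 3 then 1 else 2) * 2 ^ ambiguous_count s"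
    by (rule mult_mono[OF head Cons.IH]) simp_all
  also have "\<dots> = 2 ^ ambiguous_count (a # s)"
    by (simp add: ambiguous_count_Cons)
  finally show ?case .
qed

text \<open>Each coordinate of \<open>\<Sigma>\<close> lies in \<open>{1, 2}\<close> for six of the eight bit triples.\<close>

lemma sum_ambiguous_count_vsum3:
  "4 * (\<Sum>x1\<in>bitvecs k. \<Sum>x2\<in>bitvecs k. \<Sum>x3\<in>bitvecs k. ambiguous_count (vsum3 x1 x2 x3))
     = 3 * k * 8 ^ k"
proof (induction k)
  case 0
  show ?case by (simp add: ambiguous_count_def)
next
  case (Suc k)
  have "(\<Sum>x1\<in>bitvecs (Suc k). \<Sum>x2\<in>bitvecs (Suc k). \<Sum>x3\<in>bitvecs (Suc k).
          ambiguous_count (vsum3 x1 x2 x3))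
      = 6 * 8 ^ k + 8 * (\<Sum>x1\<in>bitvecs k. \<Sum>x2\<in>bitvecs k. \<Sum>x3\<in>bitvecs k.
          ambiguous_count (vsum3 x1 x2 x3))"
    by (simp add: sum_bitvecs_Suc ambiguous_count_Cons sum.distrib sum_Suc card_bitvecs
        power_mult_distrib[symmetric] flip: sum_distrib_left)
  with Suc.IH show ?case by (simp add: algebra_simps)
qed

lemma card_lists_with_prefix:
  assumes "finite A" "set a \<subseteq> A" "length a \<le> M"
  shows "card {u. set u \<subseteq> A \<and> length u = M \<and> take (length a) u = a} = card A ^ (M - length a)"
proof -
  have "{u. set u \<subseteq> A \<and> length u = M \<and> take (length a) u = a}
      = (\<lambda>r. a @ r) ` {r. set r \<subseteq> A \<and> length r = M - length a}"
  proof (rule set_eqI)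
    fix u
    show "u \<in> {u. set u \<subseteq> A \<and> length u = M \<and> take (length a) u = a}
        \<longleftrightarrow> u \<in> (\<lambda>r. a @ r) ` {r. set r \<subseteq> A \<and> length r = M - length a}"
    proof
      assume "u \<in> {u. set u \<subseteq> A \<and> length u = M \<and> take (length a) u = a}"
      then have "u = a @ drop (length a) u" "set (drop (length a) u) \<subseteq> A"
        "length (drop (length a) u) = M - length a"
        using append_take_drop_id[of "length a" u] set_drop_subset[of "length a" u] by auto
      then show "u \<in> (\<lambda>r. a @ r) ` {r. set r \<subseteq> A \<and> length r = M - length a}" by blast
    qed (use assms in auto)
  qed
  moreover have "inj_on (\<lambda>r. a @ r) {r. set r \<subseteq> A \<and> length r = M - length a}"
    by (auto simp: inj_on_def)
  ultimately show ?thesis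
    using assms(1) by (simp add: card_image card_lists_length_eq)
qed

lemma weighted_incidence_sum_le_card:
  fixes c :: "'a \<Rightarrow> real"
  assumes "finite X" "finite W"
    and "\<And>w. w \<in> W \<Longrightarrow> (\<Sum>x\<in>{x \<in> X. R x w}. c x) \<le> 1"
  shows "(\<Sum>x\<in>X. c x * card {w \<in> W. R x w}) \<le> card W"
proof -
  have "(\<Sum>x\<in>X. c x * card {w \<in> W. R x w}) = (\<Sum>x\<in>X. \<Sum>w\<in>{w \<in> W. R x w}. c x)"
    by (simp add: mult.commute)
  also have "\<dots> = (\<Sum>w\<in>W. \<Sum>x\<in>{x \<in> X. R x w}. c x)"
    by (rule sum.swap_restrict[OF assms(1,2)])
  also have "\<dots> \<le> (\<Sum>w\<in>W. 1)"
    by (rule sum_mono) (rule assms(3))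
  finally show ?thesis by simp
qed

lemma sum_log_card_times_le_0:
  fixes c :: "'a \<Rightarrow> real"
  assumes "finite X" "\<And>x. x \<in> X \<Longrightarrow> c x > 0" "sum c X \<le> 1"
  shows "(\<Sum>x\<in>X. log 2 (card X * c x)) \<le> 0"
proof -
  have "(\<Sum>x\<in>X. log 2 (card X * c x)) \<le> (\<Sum>x\<in>X. (card X * c x - 1) / ln 2)"
  proof (rule sum_mono)
    fix x assume "x \<in> X"
    then have "card X * c x > 0"
      using assms(1,2) card_gt_0_iff by (metis empty_iff mult_pos_pos of_nat_0_less_iff)
    then show "log 2 (card X * c x) \<le> (card X * c x - 1) / ln 2"
      unfolding log_def by (intro divide_right_mono ln_le_minus_one) simp_all
  qed
  also have "\<dots> = (card X * sum c X - card X) / ln 2"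
    by (simp add: sum_divide_distrib[symmetric] sum_subtractf sum_distrib_left)
  also have "\<dots> \<le> 0"
    using mult_left_le[OF assms(3), of "real (card X)"] by (intro divide_nonpos_pos) simp_all
  finally show ?thesis .
qed

locale zero_error_code =
  fixes k :: nat
    and \<phi>1 \<phi>2 :: "nat list \<Rightarrow> nat list \<Rightarrow> 'z list"
    and N :: "nat list \<Rightarrow> nat list \<Rightarrow> nat list \<Rightarrow> nat"
    and \<psi> :: "'z list \<Rightarrow> 'z list \<Rightarrow> nat list"
  assumes code: "zero_error_vl_code k \<phi>1 \<phi>2 N \<psi>"
begin

lemma decodes:
  assumes "x1 \<in> bitvecs k" "x2 \<in> bitvecs k" "x3 \<in> bitvecs k"
  shows "N x1 x2 x3 \<le> length (\<phi>1 x1 x3)" "N x1 x2 x3 \<le> length (\<phi>2 x2 x3)"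
    "\<psi> (take (N x1 x2 x3) (\<phi>1 x1 x3)) (take (N x1 x2 x3) (\<phi>2 x2 x3)) = vsum3 x1 x2 x3"
  using code assms unfolding zero_error_vl_code_def by blast+

lemma stopping_time_determined:
  assumes "x1 \<in> bitvecs k" "x2 \<in> bitvecs k" "x3 \<in> bitvecs k"
    and "y1 \<in> bitvecs k" "y2 \<in> bitvecs k" "y3 \<in> bitvecs k"
    and "take (N x1 x2 x3) (\<phi>1 x1 x3) = take (N x1 x2 x3) (\<phi>1 y1 y3)"
    and "take (N x1 x2 x3) (\<phi>2 x2 x3) = take (N x1 x2 x3) (\<phi>2 y2 y3)"
  shows "N y1 y2 y3 = N x1 x2 x3"
  using code assms unfolding zero_error_vl_code_def by blast

definition continues :: "nat list \<Rightarrow> nat list \<Rightarrow> nat list \<Rightarrow> 'z list \<Rightarrow> 'z list \<Rightarrow> bool" where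
  "continues x1 x2 x3 u v \<longleftrightarrow>
     take (N x1 x2 x3) u = take (N x1 x2 x3) (\<phi>1 x1 x3) \<and>
     take (N x1 x2 x3) v = take (N x1 x2 x3) (\<phi>2 x2 x3)"

lemma continues_stopping_time_le:
  assumes x: "x1 \<in> bitvecs k" "x2 \<in> bitvecs k" "x3 \<in> bitvecs k"
    and y: "y1 \<in> bitvecs k" "y2 \<in> bitvecs k" "y3 \<in> bitvecs k"
    and "continues x1 x2 x3 u v" "continues y1 y2 y3 u v"
    and le: "N x1 x2 x3 \<le> N y1 y2 y3"
  shows "N y1 y2 y3 = N x1 x2 x3"
proof (rule stopping_time_determined[OF x y])
  let ?n = "N x1 x2 x3" and ?m = "N y1 y2 y3"
  have prefix: "take ?n xs = take ?n (take ?m xs)" for xs :: "'z list"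
    using le by (simp add: min_def)
  show "take ?n (\<phi>1 x1 x3) = take ?n (\<phi>1 y1 y3)" "take ?n (\<phi>2 x2 x3) = take ?n (\<phi>2 y2 y3)"
    using assms(7,8) prefix[of u] prefix[of v] prefix[of "\<phi>1 y1 y3"] prefix[of "\<phi>2 y2 y3"]
    unfolding continues_def by metis+
qed

lemma continues_same_transcript:
  assumes x: "x1 \<in> bitvecs k" "x2 \<in> bitvecs k" "x3 \<in> bitvecs k"
    and y: "y1 \<in> bitvecs k" "y2 \<in> bitvecs k" "y3 \<in> bitvecs k"
    and cx: "continues x1 x2 x3 u v" and cy: "continues y1 y2 y3 u v"
  shows "N y1 y2 y3 = N x1 x2 x3"
    and "take (N y1 y2 y3) (\<phi>1 y1 y3) = take (N x1 x2 x3) (\<phi>1 x1 x3)"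
    and "take (N y1 y2 y3) (\<phi>2 y2 y3) = take (N x1 x2 x3) (\<phi>2 x2 x3)"
proof -
  show N_eq: "N y1 y2 y3 = N x1 x2 x3"
    using continues_stopping_time_le[OF x y cx cy] continues_stopping_time_le[OF y x cy cx]
    by linarith
  show "take (N y1 y2 y3) (\<phi>1 y1 y3) = take (N x1 x2 x3) (\<phi>1 x1 x3)"
    "take (N y1 y2 y3) (\<phi>2 y2 y3) = take (N x1 x2 x3) (\<phi>2 x2 x3)"
    using cx cy N_eq by (simp_all add: continues_def)
qed

lemma continues_same_sum:
  assumes x: "x1 \<in> bitvecs k" "x2 \<in> bitvecs k" "x3 \<in> bitvecs k"
    and y: "y1 \<in> bitvecs k" "y2 \<in> bitvecs k" "y3 \<in> bitvecs k"
    and "continues x1 x2 x3 u v" "continues y1 y2 y3 u v"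
  shows "vsum3 y1 y2 y3 = vsum3 x1 x2 x3"
  using decodes(3)[OF x] decodes(3)[OF y] continues_same_transcript[OF assms] by simp

text \<open>
  Swapping \<open>x2\<close> for \<open>y2\<close> does not change the second edge within the common stopping
  time, so \<open>(x1, y2, x3)\<close> stops there too and is decoded as \<open>(x1, x2, x3)\<close>.
\<close>

lemma continues_same_third_source:
  assumes x: "x1 \<in> bitvecs k" "x2 \<in> bitvecs k" "x3 \<in> bitvecs k"
    and y: "y1 \<in> bitvecs k" "y2 \<in> bitvecs k"
    and cx: "continues x1 x2 x3 u v" and cy: "continues y1 y2 x3 u v"
  shows "x1 = y1 \<and> x2 = y2"
proof -
  note same = continues_same_transcript[OF x y x(3) cx cy]
  let ?n = "N x1 x2 x3"
  have second: "take ?n (\<phi>2 x2 x3) = take ?n (\<phi>2 y2 x3)"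
    using same by simp
  have "N x1 y2 x3 = ?n"
    by (rule stopping_time_determined[OF x x(1) y(2) x(3) refl second])
  then have "vsum3 x1 y2 x3 = vsum3 x1 x2 x3"
    using decodes(3)[OF x(1) y(2) x(3)] decodes(3)[OF x] second by simp
  then have "x2 = y2"
    using vsum3_cancel_middle[of x2 x1 y2 x3] x y by (simp add: bitvecs_def)
  moreover have "vsum3 x2 x1 x3 = vsum3 x2 y1 x3"
    using continues_same_sum[OF x y x(3) cx cy] \<open>x2 = y2\<close> by (simp add: vsum3_commute)
  then have "x1 = y1"
    using vsum3_cancel_middle[of x1 x2 y1 x3] x y by (simp add: bitvecs_def)
  ultimately show ?thesis by simp
qed

definition continuations :: "'z list \<Rightarrow> 'z list \<Rightarrow> (nat list \<times> nat list \<times> nat list) set" where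
  "continuations u v = {(x1, x2, x3). x1 \<in> bitvecs k \<and> x2 \<in> bitvecs k \<and> x3 \<in> bitvecs k
     \<and> continues x1 x2 x3 u v}"

lemma finite_continuations: "finite (continuations u v)"
proof (rule finite_subset)
  show "continuations u v \<subseteq> bitvecs k \<times> bitvecs k \<times> bitvecs k"
    by (auto simp: continuations_def)
qed simp

lemma continuations_same_sum:
  assumes "(x1, x2, x3) \<in> continuations u v" "(y1, y2, y3) \<in> continuations u v"
  shows "vsum3 y1 y2 y3 = vsum3 x1 x2 x3"
proof -
  from assms have "x1 \<in> bitvecs k" "x2 \<in> bitvecs k" "x3 \<in> bitvecs k"
    "y1 \<in> bitvecs k" "y2 \<in> bitvecs k" "y3 \<in> bitvecs k"
    "continues x1 x2 x3 u v" "continues y1 y2 y3 u v"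
    by (simp_all add: continuations_def)
  then show ?thesis by (rule continues_same_sum)
qed

lemma inj_on_third_continuations: "inj_on (\<lambda>(x1, x2, x3). x3) (continuations u v)"
proof (rule inj_onI)
  fix x y
  assume "x \<in> continuations u v" "y \<in> continuations u v"
    and "(\<lambda>(x1, x2, x3). x3) x = (\<lambda>(x1, x2, x3). x3) y"
  then obtain x1 x2 x3 y1 y2 where "x = (x1, x2, x3)" "y = (y1, y2, x3)"
    and "(x1, x2, x3) \<in> continuations u v" "(y1, y2, x3) \<in> continuations u v"
    by (cases x, cases y) auto
  then show "x = y"
    using continues_same_third_source[of x1 x2 x3 y1 y2 u v] by (simp add: continuations_def)
qed

lemma card_continuations_le:
  assumes a: "(a1, a2, a3) \<in> continuations u v"
  shows "card (continuations u v) \<le> 2 ^ ambiguous_count (vsum3 a1 a2 a3)"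
proof -
  let ?s = "vsum3 a1 a2 a3"
  have "length ?s = k"
    using a by (simp add: continuations_def length_vsum3 bitvecs_def)
  have "(\<lambda>(x1, x2, x3). x3) ` continuations u v
      \<subseteq> {c \<in> bitvecs (length ?s). third_summand_candidate ?s c}"
  proof (rule image_subsetI)
    fix x assume "x \<in> continuations u v"
    then obtain x1 x2 x3 where x: "x = (x1, x2, x3)" and mem: "(x1, x2, x3) \<in> continuations u v"
      by (cases x) auto
    then have xB: "x1 \<in> bitvecs k" "x2 \<in> bitvecs k" "x3 \<in> bitvecs k"
      by (simp_all add: continuations_def)
    have "vsum3 x1 x2 x3 = ?s"
      by (rule continuations_same_sum[OF a mem])
    then show "(\<lambda>(x1, x2, x3). x3) x \<in> {c \<in> bitvecs (length ?s). third_summand_candidate ?s c}"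
      using third_summand_candidate_vsum3[OF xB] xB(3) \<open>length ?s = k\<close> by (simp add: x)
  qed
  with inj_on_third_continuations
  have "card (continuations u v) \<le> card {c \<in> bitvecs (length ?s). third_summand_candidate ?s c}"
    by (rule card_inj_on_le) simp
  also have "\<dots> \<le> 2 ^ ambiguous_count ?s"
    by (rule card_third_summand_candidates)
  finally show ?thesis .
qed

lemma weight_of_continuations_le_1:
  "(\<Sum>(x1, x2, x3)\<in>continuations u v. (1 / 2 :: real) ^ ambiguous_count (vsum3 x1 x2 x3)) \<le> 1"
proof (cases "continuations u v = {}")
  case False
  then obtain a1 a2 a3 where a: "(a1, a2, a3) \<in> continuations u v" by auto
  let ?m = "ambiguous_count (vsum3 a1 a2 a3)"
  have "(\<Sum>(x1, x2, x3)\<in>continuations u v. (1 / 2 :: real) ^ ambiguous_count (vsum3 x1 x2 x3))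
      = (\<Sum>_\<in>continuations u v. (1 / 2) ^ ?m)"
  proof (rule sum.cong[OF refl])
    fix x assume "x \<in> continuations u v"
    then obtain x1 x2 x3 where x: "x = (x1, x2, x3)" and mem: "(x1, x2, x3) \<in> continuations u v"
      by (cases x) auto
    have "vsum3 x1 x2 x3 = vsum3 a1 a2 a3"
      by (rule continuations_same_sum[OF a mem])
    then show "(\<lambda>(x1, x2, x3). (1 / 2 :: real) ^ ambiguous_count (vsum3 x1 x2 x3)) x
        = (1 / 2) ^ ?m"
      by (simp add: x)
  qed
  also have "\<dots> = real (card (continuations u v)) * (1 / 2) ^ ?m"
    by simp
  also have "\<dots> \<le> 2 ^ ?m * (1 / 2) ^ ?m"
    using card_continuations_le[OF a] by (intro mult_right_mono) (simp_all flip: of_nat_le_iff)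
  also have "\<dots> = 1"
    by (simp add: power_mult_distrib[symmetric])
  finally show ?thesis .
qed simp

definition sources :: "(nat list \<times> nat list \<times> nat list) set" where
  "sources = bitvecs k \<times> bitvecs k \<times> bitvecs k"

lemma finite_sources [simp]: "finite sources"
  by (simp add: sources_def)

lemma sum_sources:
  "(\<Sum>(x1, x2, x3)\<in>sources. f x1 x2 x3) = (\<Sum>x1\<in>bitvecs k. \<Sum>x2\<in>bitvecs k. \<Sum>x3\<in>bitvecs k. f x1 x2 x3)"
  by (simp add: sources_def sum.cartesian_product)

lemma card_sources: "card sources = 2 ^ (3 * k)"
  by (simp add: sources_def card_cartesian_product card_bitvecs power_mult
      flip: power_mult_distrib)

text \<open>
  Double counting over the pairs \<open>(u, v)\<close> of length \<open>M = max N\<close>: a triple with stopping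
  time \<open>n\<close> has \<open>|\<Z>|\<^sup>2\<^sup>M / |\<Z>|\<^sup>2\<^sup>n\<close> continuations, and every pair carries weight at most \<open>1\<close>.
\<close>

lemma kraft_inequality:
  assumes "finite (UNIV :: 'z set)"
  shows "(\<Sum>(x1, x2, x3)\<in>sources. (1 / 2 :: real) ^ ambiguous_count (vsum3 x1 x2 x3)
           * (1 / card (UNIV :: 'z set)) ^ (2 * N x1 x2 x3)) \<le> 1"
proof -
  define q where "q = card (UNIV :: 'z set)"
  have "q > 0" using assms by (simp add: q_def finite_UNIV_card_ge_0)
  define M where "M = Max ((\<lambda>(x1, x2, x3). N x1 x2 x3) ` sources)"
  define L where "L = {u :: 'z list. length u = M}"
  have L: "finite L" "card L = q ^ M"
    using finite_lists_length_eq[OF assms, of M] card_lists_length_eq[OF assms, of M]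
    by (simp_all add: L_def q_def)
  define weight where
    "weight = (\<lambda>(x1, x2, x3). (1 / 2 :: real) ^ ambiguous_count (vsum3 x1 x2 x3))"
  define R where "R = (\<lambda>(x1, x2, x3) (u, v). continues x1 x2 x3 u v)"
  have per_triple: "weight x * card {w \<in> L \<times> L. R x w}
      = real q ^ (2 * M) * (case x of (x1, x2, x3) \<Rightarrow>
          (1 / 2) ^ ambiguous_count (vsum3 x1 x2 x3) * (1 / real q) ^ (2 * N x1 x2 x3))"
    if "x \<in> sources" for x
  proof -
    obtain x1 x2 x3 where x: "x = (x1, x2, x3)" by (cases x)
    have xB: "x1 \<in> bitvecs k" "x2 \<in> bitvecs k" "x3 \<in> bitvecs k"
      using that x by (auto simp: sources_def)
    let ?n = "N x1 x2 x3"
    have "?n \<le> M"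
      unfolding M_def using that by (intro Max_ge) (auto simp: x intro!: rev_image_eqI)
    have "{w \<in> L \<times> L. R x w}
        = {u. set u \<subseteq> UNIV \<and> length u = M \<and> take ?n u = take ?n (\<phi>1 x1 x3)}
          \<times> {v. set v \<subseteq> UNIV \<and> length v = M \<and> take ?n v = take ?n (\<phi>2 x2 x3)}"
      by (auto simp: L_def R_def x continues_def)
    moreover have "card {u. set u \<subseteq> UNIV \<and> length u = M \<and> take ?n u = take ?n (\<phi>1 x1 x3)}
        = q ^ (M - ?n)"
      using card_lists_with_prefix[OF assms, of "take ?n (\<phi>1 x1 x3)" M]
        decodes(1)[OF xB] \<open>?n \<le> M\<close> by (simp add: q_def min_absorb1)
    moreover have "card {v. set v \<subseteq> UNIV \<and> length v = M \<and> take ?n v = take ?n (\<phi>2 x2 x3)}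
        = q ^ (M - ?n)"
      using card_lists_with_prefix[OF assms, of "take ?n (\<phi>2 x2 x3)" M]
        decodes(2)[OF xB] \<open>?n \<le> M\<close> by (simp add: q_def min_absorb1)
    ultimately have "card {w \<in> L \<times> L. R x w} = q ^ (M - ?n) * q ^ (M - ?n)"
      by (simp only: card_cartesian_product)
    moreover have "real q ^ (2 * M) = real q ^ (M - ?n) * real q ^ (M - ?n) * real q ^ (2 * ?n)"
      using \<open>?n \<le> M\<close> by (simp flip: power_add)
    ultimately show ?thesis
      using \<open>q > 0\<close> by (simp add: x weight_def power_one_over field_simps)
  qed
  have "(\<Sum>x\<in>sources. weight x * card {w \<in> L \<times> L. R x w}) \<le> card (L \<times> L)"
  proof (rule weighted_incidence_sum_le_card)
    show "finite (L \<times> L)" using L by simp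
    fix w :: "'z list \<times> 'z list"
    obtain u v where w: "w = (u, v)" by (cases w)
    have "{x \<in> sources. R x w} = continuations u v"
      by (auto simp: R_def w sources_def continuations_def)
    then show "(\<Sum>x\<in>{x \<in> sources. R x w}. weight x) \<le> 1"
      using weight_of_continuations_le_1[of u v] by (simp add: weight_def)
  qed simp
  also have "card (L \<times> L) = q ^ (2 * M)"
    using L by (simp add: card_cartesian_product mult_2 power_add)
  also have "(\<Sum>x\<in>sources. weight x * card {w \<in> L \<times> L. R x w})
      = real q ^ (2 * M) * (\<Sum>(x1, x2, x3)\<in>sources.
          (1 / 2) ^ ambiguous_count (vsum3 x1 x2 x3) * (1 / real q) ^ (2 * N x1 x2 x3))"
    unfolding sum_distrib_left by (rule sum.cong[OF refl per_triple])
  finally show ?thesis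
    using \<open>q > 0\<close> by (simp add: q_def)
qed

lemma entropy_bound:
  assumes "finite (UNIV :: 'z set)"
  shows "3 * real k * 8 ^ k
    \<le> (\<Sum>x1\<in>bitvecs k. \<Sum>x2\<in>bitvecs k. \<Sum>x3\<in>bitvecs k. real (ambiguous_count (vsum3 x1 x2 x3)))
      + 2 * log 2 (card (UNIV :: 'z set))
        * (\<Sum>x1\<in>bitvecs k. \<Sum>x2\<in>bitvecs k. \<Sum>x3\<in>bitvecs k. real (N x1 x2 x3))"
proof -
  define q where "q = real (card (UNIV :: 'z set))"
  have "q > 0" using assms by (simp add: q_def finite_UNIV_card_ge_0)
  define c where "c = (\<lambda>(x1, x2, x3).
      (1 / 2 :: real) ^ ambiguous_count (vsum3 x1 x2 x3) * (1 / q) ^ (2 * N x1 x2 x3))"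
  have log_c: "log 2 (card sources * c x) = (case x of (x1, x2, x3) \<Rightarrow>
      3 * real k - ambiguous_count (vsum3 x1 x2 x3) - 2 * N x1 x2 x3 * log 2 q)" for x
    using \<open>q > 0\<close>
    by (cases x) (simp add: c_def card_sources log_mult_pos log_nat_power log_recip)
  have "(\<Sum>x\<in>sources. log 2 (card sources * c x)) \<le> 0"
  proof (rule sum_log_card_times_le_0)
    show "(\<Sum>x\<in>sources. c x) \<le> 1"
      using kraft_inequality[OF assms] by (simp add: c_def q_def)
    show "c x > 0" for x
      using \<open>q > 0\<close> by (simp add: c_def split: prod.split)
  qed simp
  then have "(\<Sum>(x1, x2, x3)\<in>sources.
      3 * real k - ambiguous_count (vsum3 x1 x2 x3) - 2 * N x1 x2 x3 * log 2 q) \<le> 0"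
    by (simp only: log_c)
  then have "(\<Sum>x1\<in>bitvecs k. \<Sum>x2\<in>bitvecs k. \<Sum>x3\<in>bitvecs k.
      3 * real k - ambiguous_count (vsum3 x1 x2 x3) - 2 * N x1 x2 x3 * log 2 q) \<le> 0"
    by (simp only: sum_sources)
  moreover have "(8 :: real) ^ k = 2 ^ k * 2 ^ k * 2 ^ k"
    by (simp flip: power_mult_distrib)
  ultimately show ?thesis
    by (simp add: q_def sum_subtractf sum_distrib_left card_bitvecs mult_ac)
qed

lemma nine_k_le_eight_expected_N_log:
  assumes q: "card (UNIV :: 'z set) \<ge> 2"
  shows "9 * real k \<le> 8 * (expected_N k N * log 2 (card (UNIV :: 'z set)))"
proof -
  define l where "l = log 2 (card (UNIV :: 'z set))"
  define A where "A = (\<Sum>x1\<in>bitvecs k. \<Sum>x2\<in>bitvecs k. \<Sum>x3\<in>bitvecs k.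
      real (ambiguous_count (vsum3 x1 x2 x3)))"
  define S where "S = (\<Sum>x1\<in>bitvecs k. \<Sum>x2\<in>bitvecs k. \<Sum>x3\<in>bitvecs k. real (N x1 x2 x3))"
  have "finite (UNIV :: 'z set)"
    using q card.infinite by fastforce
  then have entropy: "3 * real k * 8 ^ k \<le> A + 2 * l * S"
    unfolding A_def S_def l_def by (rule entropy_bound)
  have "real (4 * (\<Sum>x1\<in>bitvecs k. \<Sum>x2\<in>bitvecs k. \<Sum>x3\<in>bitvecs k.
      ambiguous_count (vsum3 x1 x2 x3))) = 3 * real k * 8 ^ k"
    by (simp only: sum_ambiguous_count_vsum3) simp
  then have A: "4 * A = 3 * real k * 8 ^ k"
    by (simp add: A_def)
  have S: "S = expected_N k N * 8 ^ k"
    by (simp add: S_def expected_N_def power_mult)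
  have "(9 * real k - 8 * (expected_N k N * l)) * 8 ^ k = 4 * (3 * real k * 8 ^ k - A - 2 * l * S)"
    using A S by (simp add: algebra_simps)
  also have "\<dots> \<le> 0 * 8 ^ k" using entropy by simp
  finally show ?thesis
    by (simp only: mult_le_cancel_right_pos[OF zero_less_power] l_def)
qed

lemma rate_le_8_div_9:
  assumes "card (UNIV :: 'z set) \<ge> 2"
  shows "real k / (expected_N k N * log 2 (card (UNIV :: 'z set))) \<le> 8 / 9"
  using nine_k_le_eight_expected_N_log[OF assms]
  by (cases "k = 0") (simp_all add: pos_divide_le_eq)

end

theorem mainTheorem13:
  assumes "card (UNIV :: 'z::finite set) \<ge> 2"
  shows "\<forall>\<epsilon>>0. \<exists>k0::nat. \<forall>k\<ge>k0.
           \<forall>(\<phi>1 :: nat list \<Rightarrow> nat list \<Rightarrow> 'z list) (\<phi>2 :: nat list \<Rightarrow> nat list \<Rightarrow> 'z list) N \<psi>.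
             zero_error_vl_code k \<phi>1 \<phi>2 N \<psi> \<longrightarrow>
             real k / (expected_N k N * log 2 (real (card (UNIV :: 'z set)))) \<le> 8 / 9 + \<epsilon>"
proof (intro allI impI exI[of _ 0])
  fix \<epsilon> :: real and k and \<phi>1 \<phi>2 :: "nat list \<Rightarrow> nat list \<Rightarrow> 'z list" and N \<psi>
  assume "\<epsilon> > 0" and "zero_error_vl_code k \<phi>1 \<phi>2 N \<psi>"
  then interpret zero_error_code k \<phi>1 \<phi>2 N \<psi> by unfold_locales
  show "real k / (expected_N k N * log 2 (card (UNIV :: 'z set))) \<le> 8 / 9 + \<epsilon>"
    using rate_le_8_div_9[OF assms] \<open>\<epsilon> > 0\<close> by linarith
qed

end
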